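(* Every totally disconnected compact metric space has the $\omega$-FTP property. In particular, the Cantor space has the $\omega$-FTP property.
   Context: For continuous $f:X\to X$ and $x\in X$, $\omega_f(x)=\{y:\ \exists\, n_i\to+\infty,\ f^{n_i}(x)\to y\}$, totally periodic if all its points are periodic for $f$. A compact metric space $X$ has the $\omega$-FTP property if for every continuous $f:X\to X$, every totally periodic $\omega$-limit set of $f$ is finite. *)

theory Defs
  imports "HOL-Analysis.Analysis"
begin

definition omega_limit :: "'a topology \<Rightarrow> ('a \<Rightarrow> 'a) \<Rightarrow> 'a \<Rightarrow> 'a set" where
  "omega_limit X f x = {y. \<exists>n :: nat \<Rightarrow> nat. filterlim n at_top sequentially \<and>
                             limitin X (\<lambda>i. (f ^^ n i) x) y sequentially}"

definition periodic_point :: "('a \<Rightarrow> 'a) \<Rightarrow> 'a \<Rightarrow> bool" where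
  "periodic_point f y \<longleftrightarrow> (\<exists>p::nat. p > 0 \<and> (f ^^ p) y = y)"

definition totally_periodic :: "('a \<Rightarrow> 'a) \<Rightarrow> 'a set \<Rightarrow> bool" where
  "totally_periodic f A \<longleftrightarrow> (\<forall>y\<in>A. periodic_point f y)"

definition omega_FTP :: "'a topology \<Rightarrow> bool" where
  "omega_FTP X \<longleftrightarrow> (\<forall>f x. continuous_map X X f \<and> x \<in> topspace X \<and>
      totally_periodic f (omega_limit X f x) \<longrightarrow> finite (omega_limit X f x))"

definition totally_disconnected_space :: "'a topology \<Rightarrow> bool" where
  "totally_disconnected_space X \<longleftrightarrow>
     (\<forall>S. S \<subseteq> topspace X \<and> connectedin X S \<longrightarrow> (\<exists>a. S \<subseteq> {a}))"

definition cantor_space :: "(nat \<Rightarrow> nat) topology" where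
  "cantor_space = product_topology (\<lambda>_. discrete_topology {0, 1}) UNIV"

end

theory Submission
  imports Defs
begin

text \<open>An \<open>\<omega>\<close>-limit set \<open>\<Omega>\<close> of a map on a compact space cannot be trapped: a clopen set that meets
  \<open>\<Omega>\<close> and is mapped into itself on \<open>\<Omega>\<close> contains all of \<open>\<Omega>\<close>, since once the orbit enters it, it
  never leaves it again. If every point of \<open>\<Omega>\<close> is periodic, \<open>\<Omega>\<close> is the countable union of the closed
  sets of fixed points of \<open>f\<^sup>p\<close>, so by Baire one of them contains a nonempty relatively open part
  of \<open>\<Omega>\<close>; in a compact totally disconnected space this part contains \<open>\<Omega> \<inter> C\<close> for a clopen \<open>C\<close>.
  The points whose first \<open>p\<close> iterates meet \<open>C\<close> form a trapping clopen set, so \<open>f\<^sup>p\<close> is the identity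
  on \<open>\<Omega>\<close>. Finally, a clopen set containing the finite orbit of one point of \<open>\<Omega>\<close> but avoiding
  another point of \<open>\<Omega>\<close> would give a trapping set again, so \<open>\<Omega>\<close> is that finite orbit.\<close>

lemma continuous_map_funpow:
  "continuous_map X X f \<Longrightarrow> continuous_map X X (f ^^ n)"
  by (induction n) (auto intro: continuous_map_compose)

lemma funpow_in_topspace:
  "continuous_map X X f \<Longrightarrow> x \<in> topspace X \<Longrightarrow> (f ^^ n) x \<in> topspace X"
  using continuous_map_funpow continuous_map_image_subset_topspace by fastforce

lemma clopen_orbit_segment_meets:
  assumes "continuous_map X X f" "closedin X C" "openin X C"
  shows "closedin X {w \<in> topspace X. \<exists>i<p. (f ^^ i) w \<in> C}"
    and "openin X {w \<in> topspace X. \<exists>i<p. (f ^^ i) w \<in> C}"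
proof -
  have eq: "{w \<in> topspace X. \<exists>i<p. (f ^^ i) w \<in> C} = (\<Union>i<p. {w \<in> topspace X. (f ^^ i) w \<in> C})"
    by auto
  show "closedin X {w \<in> topspace X. \<exists>i<p. (f ^^ i) w \<in> C}"
    unfolding eq using assms
    by (intro closedin_Union) (auto intro: closedin_continuous_map_preimage continuous_map_funpow)
  show "openin X {w \<in> topspace X. \<exists>i<p. (f ^^ i) w \<in> C}"
    unfolding eq using assms
    by (intro openin_Union) (auto intro: openin_continuous_map_preimage continuous_map_funpow)
qed

lemma periodic_point_fixed_by_iterate:
  assumes "q > 0" "(f ^^ q) z = z" "(f ^^ p) ((f ^^ i) z) = (f ^^ i) z"
  shows "(f ^^ p) z = z"
proof -
  have "((f ^^ q) ^^ i) z = z"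
    using assms(2) by (induction i) auto
  then have "(f ^^ (q * i)) z = z"
    by (simp add: funpow_mult)
  moreover have "q * i = (q * i - i) + i"
    using assms(1) by simp
  ultimately have return: "(f ^^ (q * i - i)) ((f ^^ i) z) = z"
    by (metis comp_apply funpow_add)
  have "(f ^^ p) z = (f ^^ p) ((f ^^ (q * i - i)) ((f ^^ i) z))"
    using return by simp
  also have "\<dots> = (f ^^ (q * i - i)) ((f ^^ p) ((f ^^ i) z))"
    by (metis add.commute comp_apply funpow_add)
  also have "\<dots> = z"
    using assms(3) return by simp
  finally show ?thesis .
qed

lemma separated_between_point_totally_disconnected:
  assumes "compact_space X" "Hausdorff_space X" "totally_disconnected_space X"
    and "y \<in> topspace X" "closedin X T" "y \<notin> T"
  shows "separated_between X {y} T"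
proof -
  define C where "C = connected_component_of_set X y"
  have C: "C \<in> connected_components_of X"
    unfolding C_def connected_components_of_def using assms(4) by blast
  have "connectedin X C" "C \<subseteq> topspace X" "y \<in> C"
    unfolding C_def using assms(4)
    by (auto simp: connectedin_connected_component_of connected_component_of_refl
        connected_component_of_subset_topspace)
  then have "C = {y}"
    using assms(3) unfolding totally_disconnected_space_def by blast
  then show ?thesis
    using separated_between_compact_connected_component[OF
        compact_imp_locally_compact_space[OF assms(1)] assms(2) C] assms(4-6)
    by (simp add: disjnt_def)
qed

definition orbit_cluster_points :: "'a topology \<Rightarrow> ('a \<Rightarrow> 'a) \<Rightarrow> 'a \<Rightarrow> 'a set" where
  "orbit_cluster_points X f x =
     {y \<in> topspace X. \<forall>U. openin X U \<and> y \<in> U \<longrightarrow> (\<exists>\<^sub>F n in sequentially. (f ^^ n) x \<in> U)}"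

lemma omega_limit_subset_orbit_cluster_points:
  "omega_limit X f x \<subseteq> orbit_cluster_points X f x"
proof
  fix y assume "y \<in> omega_limit X f x"
  then obtain n where n: "filterlim n at_top sequentially"
    and lim: "limitin X (\<lambda>i. (f ^^ n i) x) y sequentially"
    unfolding omega_limit_def by blast
  have "\<exists>\<^sub>F m in sequentially. (f ^^ m) x \<in> U" if "openin X U" "y \<in> U" for U
    unfolding frequently_sequentially
  proof
    fix N
    have "\<forall>\<^sub>F i in sequentially. (f ^^ n i) x \<in> U" "\<forall>\<^sub>F i in sequentially. N \<le> n i"
      using lim that n unfolding limitin_def filterlim_at_top by blast+
    then have "\<forall>\<^sub>F i in sequentially. (f ^^ n i) x \<in> U \<and> N \<le> n i"
      by (rule eventually_conj)
    then obtain i where "(f ^^ n i) x \<in> U \<and> N \<le> n i"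
      unfolding eventually_sequentially by blast
    then show "\<exists>m\<ge>N. (f ^^ m) x \<in> U" by blast
  qed
  moreover have "y \<in> topspace X"
    using lim unfolding limitin_def by blast
  ultimately show "y \<in> orbit_cluster_points X f x"
    unfolding orbit_cluster_points_def by blast
qed

lemma (in Metric_space) omega_limit_eq_orbit_cluster_points:
  "omega_limit mtopology f x = orbit_cluster_points mtopology f x"
proof (rule subset_antisym[OF omega_limit_subset_orbit_cluster_points subsetI])
  fix y assume y: "y \<in> orbit_cluster_points mtopology f x"
  then have "y \<in> M"
    unfolding orbit_cluster_points_def by simp
  have "\<exists>m\<ge>i. (f ^^ m) x \<in> mball y (1 / Suc i)" for i
  proof -
    have "openin mtopology (mball y (1 / Suc i))" "y \<in> mball y (1 / Suc i)"
      using \<open>y \<in> M\<close> by simp_all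
    then show ?thesis
      using y unfolding orbit_cluster_points_def frequently_sequentially by blast
  qed
  then obtain n where n: "\<And>i. i \<le> n i" "\<And>i. (f ^^ n i) x \<in> mball y (1 / Suc i)"
    by metis
  have "filterlim n at_top sequentially"
    using n(1) unfolding filterlim_at_top eventually_sequentially by (meson le_trans)
  moreover have "limitin mtopology (\<lambda>i. (f ^^ n i) x) y sequentially"
    unfolding limitin_metric
  proof (intro conjI allI impI \<open>y \<in> M\<close>)
    fix e :: real assume "e > 0"
    then obtain N where N: "inverse (real (Suc N)) < e"
      using reals_Archimedean by blast
    have "(f ^^ n i) x \<in> M \<and> d ((f ^^ n i) x) y < e" if "N \<le> i" for i
    proof -
      have "1 / real (Suc i) \<le> inverse (real (Suc N))"
        using that by (simp add: divide_simps)
      moreover have "(f ^^ n i) x \<in> M" "d y ((f ^^ n i) x) < 1 / Suc i"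
        using n(2)[of i] by auto
      ultimately show ?thesis
        using N commute[of y "(f ^^ n i) x"] by linarith
    qed
    then show "\<forall>\<^sub>F i in sequentially. (f ^^ n i) x \<in> M \<and> d ((f ^^ n i) x) y < e"
      unfolding eventually_sequentially by blast
  qed
  ultimately show "y \<in> omega_limit mtopology f x"
    unfolding omega_limit_def by blast
qed

locale orbit_dynamics =
  fixes X :: "'a topology" and f :: "'a \<Rightarrow> 'a" and x :: 'a
  assumes continuous_f: "continuous_map X X f" and x_in_topspace: "x \<in> topspace X"
begin

abbreviation \<Omega> :: "'a set" where "\<Omega> \<equiv> orbit_cluster_points X f x"

lemma \<Omega>_subset_topspace: "\<Omega> \<subseteq> topspace X"
  unfolding orbit_cluster_points_def by auto

lemma closedin_\<Omega>: "closedin X \<Omega>"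
proof -
  have "\<exists>U. openin X U \<and> y \<in> U \<and> U \<subseteq> topspace X - \<Omega>" if "y \<in> topspace X - \<Omega>" for y
  proof -
    have "\<not> (\<forall>U. openin X U \<and> y \<in> U \<longrightarrow> (\<exists>\<^sub>F n in sequentially. (f ^^ n) x \<in> U))"
      using that unfolding orbit_cluster_points_def by blast
    then obtain U where U: "openin X U" "y \<in> U"
      and never: "\<forall>\<^sub>F n in sequentially. (f ^^ n) x \<notin> U"
      by (auto simp: not_frequently)
    have "U \<subseteq> topspace X - \<Omega>"
      using openin_subset[OF U(1)] U(1) never
      unfolding orbit_cluster_points_def frequently_def by auto
    then show ?thesis using U by blast
  qed
  then have "openin X (topspace X - \<Omega>)"
    by (subst openin_subopen) blast
  then show ?thesis
    using \<Omega>_subset_topspace by (simp add: closedin_def)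
qed

lemma image_\<Omega>: "y \<in> \<Omega> \<Longrightarrow> f y \<in> \<Omega>"
proof -
  assume y: "y \<in> \<Omega>"
  have "\<exists>\<^sub>F n in sequentially. (f ^^ n) x \<in> U" if U: "openin X U" "f y \<in> U" for U
  proof -
    have "openin X {z \<in> topspace X. f z \<in> U}"
      by (rule openin_continuous_map_preimage[OF continuous_f U(1)])
    moreover have "y \<in> {z \<in> topspace X. f z \<in> U}"
      using y U \<Omega>_subset_topspace by auto
    ultimately have "\<forall>N. \<exists>n\<ge>N. f ((f ^^ n) x) \<in> U"
      using y unfolding orbit_cluster_points_def frequently_sequentially by blast
    then have "\<forall>N. \<exists>n\<ge>N. (f ^^ Suc n) x \<in> U"
      by simp
    then show ?thesis
      unfolding frequently_sequentially by (meson le_SucI)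
  qed
  moreover have "f y \<in> topspace X"
    using y \<Omega>_subset_topspace continuous_f continuous_map_image_subset_topspace by blast
  ultimately show "f y \<in> \<Omega>"
    unfolding orbit_cluster_points_def by blast
qed

lemma funpow_image_\<Omega>: "y \<in> \<Omega> \<Longrightarrow> (f ^^ i) y \<in> \<Omega>"
  by (induction i) (auto intro: image_\<Omega>)

end

locale compact_dynamics = orbit_dynamics +
  assumes compact: "compact_space X"
begin

lemma eventually_orbit_in_open_nbhd_\<Omega>:
  assumes "openin X G" "\<Omega> \<subseteq> G"
  shows "\<forall>\<^sub>F n in sequentially. (f ^^ n) x \<in> G"
proof -
  have "\<forall>z \<in> topspace X - G. \<exists>U. openin X U \<and> z \<in> U \<and> (\<forall>\<^sub>F n in sequentially. (f ^^ n) x \<notin> U)"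
    using assms(2) unfolding orbit_cluster_points_def frequently_def by auto
  then obtain U where U: "\<And>z. z \<in> topspace X - G \<Longrightarrow> openin X (U z) \<and> z \<in> U z"
    and avoid: "\<And>z. z \<in> topspace X - G \<Longrightarrow> \<forall>\<^sub>F n in sequentially. (f ^^ n) x \<notin> U z"
    by metis
  have "compactin X (topspace X - G)"
    using assms compact closedin_compact_space by blast
  moreover have "\<forall>V \<in> U ` (topspace X - G). openin X V" "topspace X - G \<subseteq> \<Union>(U ` (topspace X - G))"
    using U by blast+
  ultimately obtain \<F> where "finite \<F>" "\<F> \<subseteq> U ` (topspace X - G)" "topspace X - G \<subseteq> \<Union>\<F>"
    unfolding compactin_def by meson
  then obtain F where F: "finite F" "F \<subseteq> topspace X - G" "topspace X - G \<subseteq> (\<Union>z\<in>F. U z)"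
    by (metis finite_subset_image)
  have "\<forall>\<^sub>F n in sequentially. \<forall>z\<in>F. (f ^^ n) x \<notin> U z"
    using F avoid by (intro eventually_ball_finite) auto
  then show ?thesis
  proof (rule eventually_mono)
    fix n assume "\<forall>z\<in>F. (f ^^ n) x \<notin> U z"
    then show "(f ^^ n) x \<in> G"
      using F(3) funpow_in_topspace[OF continuous_f x_in_topspace, of n] by blast
  qed
qed

lemma \<Omega>_subset_trapping_clopen:
  assumes "closedin X C" "openin X C" "\<Omega> \<inter> C \<noteq> {}"
    and trapping: "\<And>z. z \<in> \<Omega> \<Longrightarrow> z \<in> C \<Longrightarrow> f z \<in> C"
  shows "\<Omega> \<subseteq> C"
proof
  fix z assume "z \<in> \<Omega>"
  define G where "G = (topspace X - C) \<union> {w \<in> topspace X. f w \<in> C}"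
  have "openin X G"
    unfolding G_def using assms(1,2) openin_continuous_map_preimage[OF continuous_f assms(2)] by blast
  moreover have "\<Omega> \<subseteq> G"
    unfolding G_def using trapping \<Omega>_subset_topspace by blast
  ultimately obtain N where N: "\<And>n. n \<ge> N \<Longrightarrow> (f ^^ n) x \<in> G"
    using eventually_orbit_in_open_nbhd_\<Omega> unfolding eventually_sequentially by blast
  obtain n where n: "n \<ge> N" "(f ^^ n) x \<in> C"
    using assms(2,3) unfolding orbit_cluster_points_def frequently_sequentially by blast
  \<comment> \<open>after time \<open>N\<close> an orbit point in \<open>C\<close> lies in \<open>G\<close>, so its image is in \<open>C\<close> again\<close>
  have stays: "(f ^^ (n + k)) x \<in> C" for k
  proof (induction k)
    case (Suc k)
    then have "(f ^^ (n + k)) x \<in> G \<inter> C"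
      using N n(1) by simp
    then show ?case
      unfolding G_def by auto
  qed (use n in simp)
  show "z \<in> C"
  proof (rule ccontr)
    assume "z \<notin> C"
    then obtain m where "m \<ge> n" "(f ^^ m) x \<in> topspace X - C"
      using \<open>z \<in> \<Omega>\<close> assms(1) unfolding orbit_cluster_points_def frequently_sequentially by blast
    then show False
      using stays[of "m - n"] by simp
  qed
qed

lemma \<Omega>_enters_clopen_within_period:
  assumes "p > 0" "closedin X C" "openin X C" "\<Omega> \<inter> C \<noteq> {}"
    and fixed: "\<And>z. z \<in> \<Omega> \<inter> C \<Longrightarrow> (f ^^ p) z = z"
    and "z \<in> \<Omega>"
  shows "\<exists>i<p. (f ^^ i) z \<in> C"
proof -
  define D where "D = {w \<in> topspace X. \<exists>i<p. (f ^^ i) w \<in> C}"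
  have "\<Omega> \<subseteq> D"
  proof (rule \<Omega>_subset_trapping_clopen)
    show "closedin X D" "openin X D"
      unfolding D_def by (fact clopen_orbit_segment_meets[OF continuous_f assms(2,3)])+
    obtain y where "y \<in> \<Omega> \<inter> C"
      using assms(4) by blast
    moreover have "y \<in> D"
      unfolding D_def using \<open>y \<in> \<Omega> \<inter> C\<close> \<open>p > 0\<close> \<Omega>_subset_topspace
      by (intro CollectI conjI exI[of _ 0]) auto
    ultimately show "\<Omega> \<inter> D \<noteq> {}"
      by blast
    fix w assume w: "w \<in> \<Omega>" "w \<in> D"
    then obtain i where "i < p" "(f ^^ i) w \<in> C"
      unfolding D_def by blast
    have shift: "(f ^^ j) (f w) = (f ^^ Suc j) w" for j
      by (simp add: funpow_swap1)
    have "\<exists>j<p. (f ^^ j) (f w) \<in> C"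
    proof (cases i)
      case 0
      then have "(f ^^ Suc (p - 1)) w \<in> C"
        using fixed w(1) \<open>(f ^^ i) w \<in> C\<close> \<open>p > 0\<close> by simp
      then show ?thesis
        using \<open>p > 0\<close> by (intro exI[of _ "p - 1"]) (simp add: shift)
    next
      case (Suc j)
      then show ?thesis
        using \<open>i < p\<close> \<open>(f ^^ i) w \<in> C\<close> by (intro exI[of _ j]) (simp add: shift)
    qed
    then show "f w \<in> D"
      using image_\<Omega>[OF w(1)] \<Omega>_subset_topspace unfolding D_def by blast
  qed
  then show ?thesis
    using \<open>z \<in> \<Omega>\<close> unfolding D_def by blast
qed

lemma \<Omega>_disjoint_clopen_avoiding_orbit:
  assumes "p > 0" and fixed: "\<And>z. z \<in> \<Omega> \<Longrightarrow> (f ^^ p) z = z"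
    and "y \<in> \<Omega>" "closedin X U" "openin X U" "\<And>i. i < p \<Longrightarrow> (f ^^ i) y \<notin> U"
  shows "\<Omega> \<inter> U = {}"
proof -
  define W where "W = topspace X - {w \<in> topspace X. \<exists>i<p. (f ^^ i) w \<in> U}"
  have "\<Omega> \<subseteq> W"
  proof (rule \<Omega>_subset_trapping_clopen)
    show "closedin X W" "openin X W"
      unfolding W_def using clopen_orbit_segment_meets[OF continuous_f assms(4,5), of p]
      by (simp_all add: closedin_diff openin_diff)
    show "\<Omega> \<inter> W \<noteq> {}"
      using assms(3,6) \<Omega>_subset_topspace unfolding W_def by blast
    fix w assume w: "w \<in> \<Omega>" "w \<in> W"
    have shift: "(f ^^ i) (f w) = (f ^^ Suc i) w" for i
      by (simp add: funpow_swap1)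
    have "(f ^^ i) (f w) \<notin> U" if "i < p" for i
    proof (cases "Suc i < p")
      case True
      then show ?thesis
        using w(2) unfolding W_def shift by blast
    next
      case False
      \<comment> \<open>the last point of the shifted segment is \<open>f\<^sup>p w = w\<close> again\<close>
      then have "Suc i = p"
        using \<open>i < p\<close> by simp
      then have "(f ^^ i) (f w) = (f ^^ 0) w"
        using fixed[OF w(1)] by (simp only: shift funpow_0)
      then show ?thesis
        using w(2) \<open>p > 0\<close> unfolding W_def by auto
    qed
    moreover have "f w \<in> topspace X"
      using image_\<Omega>[OF w(1)] \<Omega>_subset_topspace by blast
    ultimately show "f w \<in> W"
      unfolding W_def by blast
  qed
  show ?thesis
  proof (rule equals0I)
    fix w assume w: "w \<in> \<Omega> \<inter> U"
    then have "w \<in> {w \<in> topspace X. \<exists>i<p. (f ^^ i) w \<in> U}"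
      using \<open>p > 0\<close> \<Omega>_subset_topspace by (intro CollectI conjI exI[of _ 0]) auto
    then show False
      using w \<open>\<Omega> \<subseteq> W\<close> unfolding W_def by blast
  qed
qed

lemma open_part_of_\<Omega>_fixed_by_iterate:
  assumes "Hausdorff_space X" "\<Omega> \<noteq> {}" and periodic: "\<forall>y\<in>\<Omega>. periodic_point f y"
  obtains p V y where "p > 0" "openin X V" "y \<in> V \<inter> \<Omega>" "V \<inter> \<Omega> \<subseteq> {z. (f ^^ p) z = z}"
proof -
  define Y where "Y = subtopology X \<Omega>"
  define Fix where "Fix p = {z \<in> \<Omega>. (f ^^ p) z = z}" for p
  have "compact_space Y" "Hausdorff_space Y"
    unfolding Y_def
    using compact_space_subtopology[OF closedin_compact_space[OF compact closedin_\<Omega>]]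
      Hausdorff_space_subtopology[OF assms(1)] by blast+
  then have Baire: "locally_compact_space Y \<and> regular_space Y"
    using compact_imp_locally_compact_space compact_Hausdorff_imp_regular_space by blast
  have closed_Fix: "closedin Y (Fix p)" for p
  proof -
    have "closedin X {z \<in> topspace X. (f ^^ p) z = z}"
      using closedin_continuous_maps_eq[OF assms(1) continuous_map_funpow[OF continuous_f]
          continuous_map_id] by simp
    moreover have "Fix p = \<Omega> \<inter> {z \<in> topspace X. (f ^^ p) z = z}"
      unfolding Fix_def using \<Omega>_subset_topspace by auto
    ultimately show ?thesis
      unfolding Y_def by (metis closedin_subtopology_Int_closed)
  qed
  have "(\<Union>p\<in>{0<..}. Fix p) = topspace Y"
    using periodic \<Omega>_subset_topspace unfolding Fix_def Y_def periodic_point_def by auto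
  then have "Y interior_of (\<Union>p\<in>{0<..}. Fix p) = \<Omega>"
    using \<Omega>_subset_topspace interior_of_topspace[of Y] unfolding Y_def by (simp add: Int_absorb1)
  then have "\<not> (\<forall>T \<in> Fix ` {0<..}. closedin Y T \<and> Y interior_of T = {})"
    using Baire_category_alt[OF disjI2[OF Baire], of "Fix ` {0<..}"] assms(2) by auto
  then obtain p where "p > 0" "Y interior_of Fix p \<noteq> {}"
    using closed_Fix by blast
  then obtain y where y: "y \<in> Y interior_of Fix p"
    by blast
  obtain V where "openin X V" and V: "Y interior_of Fix p = V \<inter> \<Omega>"
    using openin_interior_of[of Y "Fix p"] unfolding Y_def openin_subtopology by blast
  have "V \<inter> \<Omega> \<subseteq> {z. (f ^^ p) z = z}"
    using interior_of_subset[of Y "Fix p"] unfolding V by (auto simp: Fix_def)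
  then show ?thesis
    by (rule that[OF \<open>p > 0\<close> \<open>openin X V\<close> y[unfolded V]])
qed

end

locale totally_disconnected_dynamics = compact_dynamics +
  assumes Hausdorff: "Hausdorff_space X"
    and totally_disconnected: "totally_disconnected_space X"
begin

lemma clopen_nbhd_avoiding_closed:
  assumes "y \<in> topspace X" "closedin X T" "y \<notin> T"
  obtains U where "closedin X U" "openin X U" "y \<in> U" "U \<inter> T = {}"
  using separated_between_point_totally_disconnected[OF compact Hausdorff totally_disconnected assms]
  unfolding separated_between by blast

lemma clopen_part_of_\<Omega>_fixed_by_iterate:
  assumes "\<Omega> \<noteq> {}" and periodic: "\<forall>y\<in>\<Omega>. periodic_point f y"
  obtains p C where "p > 0" "closedin X C" "openin X C" "\<Omega> \<inter> C \<noteq> {}"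
    "\<And>z. z \<in> \<Omega> \<inter> C \<Longrightarrow> (f ^^ p) z = z"
proof -
  obtain p V y where "p > 0" "openin X V" and y: "y \<in> V \<inter> \<Omega>"
    and V: "V \<inter> \<Omega> \<subseteq> {z. (f ^^ p) z = z}"
    by (rule open_part_of_\<Omega>_fixed_by_iterate[OF Hausdorff assms])
  have "closedin X (\<Omega> - V)"
    using closedin_\<Omega> \<open>openin X V\<close> by blast
  moreover have "y \<in> topspace X" "y \<notin> \<Omega> - V"
    using y \<Omega>_subset_topspace by auto
  ultimately obtain C where C: "closedin X C" "openin X C" "y \<in> C" "C \<inter> (\<Omega> - V) = {}"
    using clopen_nbhd_avoiding_closed by blast
  show ?thesis
  proof (rule that[OF \<open>p > 0\<close> C(1,2)])
    show "\<Omega> \<inter> C \<noteq> {}"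
      using y C(3) by blast
    fix z assume "z \<in> \<Omega> \<inter> C"
    then show "(f ^^ p) z = z"
      using C(4) V by blast
  qed
qed

lemma uniform_period_\<Omega>:
  assumes periodic: "\<forall>y\<in>\<Omega>. periodic_point f y"
  obtains p where "p > 0" "\<And>z. z \<in> \<Omega> \<Longrightarrow> (f ^^ p) z = z"
proof (cases "\<Omega> = {}")
  case False
  obtain p C where "p > 0" and C: "closedin X C" "openin X C" "\<Omega> \<inter> C \<noteq> {}"
    and fixed: "\<And>z. z \<in> \<Omega> \<inter> C \<Longrightarrow> (f ^^ p) z = z"
    using clopen_part_of_\<Omega>_fixed_by_iterate[OF False periodic] by blast
  have "(f ^^ p) z = z" if z: "z \<in> \<Omega>" for z
  proof -
    obtain i where "(f ^^ i) z \<in> C"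
      using \<Omega>_enters_clopen_within_period[OF \<open>p > 0\<close> C fixed z] by blast
    then have "(f ^^ p) ((f ^^ i) z) = (f ^^ i) z"
      using fixed funpow_image_\<Omega> z by blast
    moreover obtain q where "q > 0" and "(f ^^ q) z = z"
      using periodic z unfolding periodic_point_def by blast
    ultimately show ?thesis
      by (rule periodic_point_fixed_by_iterate[rotated 2])
  qed
  then show ?thesis
    using that \<open>p > 0\<close> by blast
qed (use that[of 1] in simp)

lemma finite_\<Omega>:
  assumes periodic: "\<forall>y\<in>\<Omega>. periodic_point f y"
  shows "finite \<Omega>"
proof (cases "\<Omega> = {}")
  case False
  then obtain y where "y \<in> \<Omega>"
    by blast
  obtain p where "p > 0" and fixed: "\<And>z. z \<in> \<Omega> \<Longrightarrow> (f ^^ p) z = z"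
    using uniform_period_\<Omega>[OF periodic] by blast
  define Orb where "Orb = (\<lambda>i. (f ^^ i) y) ` {..<p}"
  have "Orb \<subseteq> topspace X"
    unfolding Orb_def using funpow_image_\<Omega>[OF \<open>y \<in> \<Omega>\<close>] \<Omega>_subset_topspace by blast
  then have "closedin X Orb"
    by (rule closedin_Hausdorff_finite[OF Hausdorff]) (simp add: Orb_def)
  have "z \<in> Orb" if z: "z \<in> \<Omega>" for z
  proof (rule ccontr)
    assume "z \<notin> Orb"
    moreover have "z \<in> topspace X"
      using z \<Omega>_subset_topspace by blast
    ultimately obtain U where U: "closedin X U" "openin X U" "z \<in> U" "U \<inter> Orb = {}"
      using clopen_nbhd_avoiding_closed \<open>closedin X Orb\<close> by blast
    have "(f ^^ i) y \<notin> U" if "i < p" for i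
      using U(4) that unfolding Orb_def by blast
    then have "\<Omega> \<inter> U = {}"
      using \<Omega>_disjoint_clopen_avoiding_orbit[OF \<open>p > 0\<close> fixed \<open>y \<in> \<Omega>\<close> U(1,2)] by blast
    then show False
      using z U(3) by blast
  qed
  then have "\<Omega> \<subseteq> Orb"
    by blast
  moreover have "finite Orb"
    by (simp add: Orb_def)
  ultimately show ?thesis
    by (rule finite_subset)
qed simp

end

lemma omega_FTP_compact_totally_disconnected:
  assumes "metrizable_space X" "compact_space X" "totally_disconnected_space X"
  shows "omega_FTP X"
  unfolding omega_FTP_def
proof (intro allI impI, elim conjE)
  fix f x assume "continuous_map X X f" "x \<in> topspace X"
    and periodic: "totally_periodic f (omega_limit X f x)"
  obtain M d where "Metric_space M d" and X: "X = Metric_space.mtopology M d"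
    using assms(1) unfolding metrizable_space_def by blast
  interpret totally_disconnected_dynamics X f x
    using assms \<open>continuous_map X X f\<close> \<open>x \<in> topspace X\<close> metrizable_imp_Hausdorff_space
    by unfold_locales auto
  have \<Omega>: "omega_limit X f x = \<Omega>"
    unfolding X by (rule Metric_space.omega_limit_eq_orbit_cluster_points[OF \<open>Metric_space M d\<close>])
  show "finite (omega_limit X f x)"
    using periodic unfolding \<Omega> totally_periodic_def by (rule finite_\<Omega>)
qed

lemma metrizable_space_cantor_space: "metrizable_space cantor_space"
  unfolding cantor_space_def by (subst metrizable_space_product_topology) auto

lemma compact_space_cantor_space: "compact_space cantor_space"
  unfolding cantor_space_def
  by (subst compact_space_product_topology) (auto simp: compact_space_discrete_topology)

lemma totally_disconnected_cantor_space: "totally_disconnected_space cantor_space"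
  unfolding totally_disconnected_space_def
proof (intro allI impI, elim conjE)
  fix S assume "S \<subseteq> topspace cantor_space" "connectedin cantor_space S"
  have "w k = s k" if "w \<in> S" "s \<in> S" for w s k
  proof -
    have "continuous_map cantor_space (discrete_topology {0, 1}) (\<lambda>w. w k)"
      unfolding cantor_space_def by (rule continuous_map_product_projection) simp
    then have "connectedin (discrete_topology {0::nat, 1}) ((\<lambda>w. w k) ` S)"
      using \<open>connectedin cantor_space S\<close> by (rule connectedin_continuous_map_image)
    then show ?thesis
      using that unfolding connectedin_discrete_topology by blast
  qed
  then show "\<exists>a. S \<subseteq> {a}"
    by blast
qed

theorem corollary2p6:
  shows "(\<forall>(M :: 'a set) d. Metric_space M d \<and> compact_space (Metric_space.mtopology M d)
            \<and> totally_disconnected_space (Metric_space.mtopology M d)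
            \<longrightarrow> omega_FTP (Metric_space.mtopology M d))
         \<and> omega_FTP cantor_space"
proof (intro conjI allI impI)
  fix M :: "'a set" and d
  assume "Metric_space M d \<and> compact_space (Metric_space.mtopology M d)
            \<and> totally_disconnected_space (Metric_space.mtopology M d)"
  then show "omega_FTP (Metric_space.mtopology M d)"
    using omega_FTP_compact_totally_disconnected Metric_space.metrizable_space_mtopology by blast
next
  show "omega_FTP cantor_space"
    by (rule omega_FTP_compact_totally_disconnected[OF metrizable_space_cantor_space
          compact_space_cantor_space totally_disconnected_cantor_space])
qed

end
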